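(* For every integer $t\ge1$, $$-\frac{1}{3t^2}<\frac{S_4(t)}{(-1)^t\binom{-3/2}{t}}-\frac{(-1)^t}{\binom{-3/2}{t}}\frac{\sinh\alpha}{\alpha}+\frac{\cosh\alpha}{2t}<\frac{13}{20t^2}.$$
   Context: $\alpha=\pi/6$. $(a)_m=a(a+1)\cdots(a+m-1)$ is the rising factorial ($(a)_0=1$); $\binom{x}{m}=x(x-1)\cdots(x-m+1)/m!$. For $t\ge0$, $$S_4(t)=\sum_{s=0}^t(-1)^s(1/2-s)_{s+1}\sum_{u=0}^s\frac{(-1)^u(-s)_u}{(s+u+1)!\,(2u)!}\left(\frac{\pi^2}{36}\right)^u.$$ *)

theory Defs
  imports "HOL-Analysis.Analysis"
begin

definition alpha :: real where "alpha = pi / 6"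

definition S4 :: "nat \<Rightarrow> real" where
  "S4 t = (\<Sum>s=0..t. (-1)^s * pochhammer (1/2 - real s) (s+1) *
      (\<Sum>u=0..s. (-1)^u * pochhammer (- real s) u / (fact (s+u+1) * fact (2*u))
                  * (pi^2/36)^u))"

end

theory Submission
  imports Defs
begin

text \<open>
  Write c(s) = (1/2)_s / s! and F(u,s) = c(s) / (s+1) * prod_{j=1..u} (s+1-j) / (s+1+j).
  Expanding the Pochhammer symbols gives S4(t) = 1/2 * sum_u \<alpha>^(2u)/(2u)! * sum_{s<=t} F(u,s).
  Together with G(u,s) = 4(s-u) F(u,s), F is a WZ pair, whence sum_s F(u,s) = 2/(2u+1) and the
  complete double sum is sinh \<alpha> / \<alpha>. Since (-1)^t (-3/2 choose t) = 2(t+1) c(t+1), the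
  quantity to be bounded is sum_u \<alpha>^(2u)/(2u)! * (1/(2t) - R(u) / (4(t+1) c(t+1))), where
  R(u) = sum_{s>t} F(u,s) is a tail. Comparing F(u,s) with F(0,s), whose tails telescope, traps
  R(u) between 2 c(t+1) (1 - u(u+1)/(3(t+2))) and 2 c(t+1). Hence the sum is positive and at most
  cosh \<alpha> * (1/(2t(t+1)) + \<alpha>^2/(6(t+1)(t+2))), which is below 13/(20t^2) because \<alpha>^2 < 0.275.
\<close>

lemma telescope_tail_sums:
  fixes f g :: "nat \<Rightarrow> real"
  assumes "f \<longlonglongrightarrow> 0" and "\<And>n. g n = f n - f (Suc n)"
  shows "(\<lambda>n. g (n + m)) sums f m"
proof -
  have "(\<lambda>n. f (n + m)) \<longlonglongrightarrow> 0"
    using LIMSEQ_ignore_initial_segment[OF assms(1)] .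
  from telescope_sums'[OF this] show ?thesis
    by (simp add: assms(2))
qed

text \<open>central_ratio n = (2n choose n) / 4^n.\<close>

definition central_ratio :: "nat \<Rightarrow> real" where
  "central_ratio n = pochhammer (1/2) n / fact n"

lemma central_ratio_0 [simp]: "central_ratio 0 = 1"
  by (simp add: central_ratio_def)

lemma central_ratio_Suc:
  "central_ratio (Suc n) = central_ratio n * (2 * real n + 1) / (2 * real n + 2)"
  by (simp add: central_ratio_def pochhammer_Suc field_simps)

lemma central_ratio_pos: "central_ratio n > 0"
  by (induction n) (simp_all add: central_ratio_Suc)

lemma central_ratio_sq_le: "central_ratio n ^ 2 \<le> 1 / (2 * real n + 1)"
proof (induction n)
  case 0
  then show ?case by simp
next
  case (Suc n)
  have "central_ratio (Suc n) ^ 2 = central_ratio n ^ 2 * ((2 * real n + 1) / (2 * real n + 2))^2"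
    by (simp add: central_ratio_Suc power_mult_distrib power_divide)
  also have "\<dots> \<le> 1 / (2 * real n + 1) * ((2 * real n + 1) / (2 * real n + 2))^2"
    by (rule mult_right_mono[OF Suc]) simp
  also have "\<dots> = (2 * real n + 1) / (2 * real n + 2)^2"
    by (simp add: power2_eq_square)
  also have "\<dots> \<le> 1 / (2 * real (Suc n) + 1)"
    by (simp add: divide_simps) (simp add: power2_eq_square algebra_simps)
  finally show ?case .
qed

lemma central_ratio_tendsto_0: "central_ratio \<longlonglongrightarrow> 0"
proof -
  have "(\<lambda>n. central_ratio n ^ 2) \<longlonglongrightarrow> 0"
  proof (rule tendsto_sandwich[of "\<lambda>_. 0" _ _ "\<lambda>n. inverse (real (Suc n))"])
    show "\<forall>\<^sub>F n in sequentially. central_ratio n ^ 2 \<le> inverse (real (Suc n))"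
    proof (intro always_eventually allI)
      fix n
      have "1 / (2 * real n + 1) \<le> inverse (real (Suc n))"
        by (simp add: field_simps)
      with central_ratio_sq_le[of n] show "central_ratio n ^ 2 \<le> inverse (real (Suc n))"
        by linarith
    qed
  qed (use LIMSEQ_inverse_real_of_nat in auto)
  then have "(\<lambda>n. sqrt (central_ratio n ^ 2)) \<longlonglongrightarrow> sqrt 0"
    by (rule tendsto_real_sqrt)
  then show ?thesis
    using central_ratio_pos by (simp add: less_imp_le)
qed

section \<open>A WZ pair\<close>

definition wz_prod :: "nat \<Rightarrow> nat \<Rightarrow> real" where
  "wz_prod u s = (\<Prod>j=1..u. (real s + 1 - real j) / (real s + 1 + real j))"

lemma wz_prod_0 [simp]: "wz_prod 0 s = 1"
  by (simp add: wz_prod_def)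

lemma wz_prod_Suc: "wz_prod (Suc u) s = wz_prod u s * ((real s - real u) / (real s + real u + 2))"
  by (simp add: wz_prod_def prod.cl_ivl_Suc algebra_simps)

lemma wz_prod_eq_0: "s < u \<Longrightarrow> wz_prod u s = 0"
proof (induction u)
  case (Suc u)
  then show ?case
    by (cases "s = u") (simp_all add: wz_prod_Suc)
qed simp

lemma wz_prod_nonneg: "0 \<le> wz_prod u s"
proof (induction u)
  case (Suc u)
  then show ?case
    by (cases "u \<le> s") (simp_all add: wz_prod_Suc wz_prod_eq_0)
qed simp

lemma wz_prod_le_1: "wz_prod u s \<le> 1"
proof (induction u)
  case (Suc u)
  show ?case
  proof (cases "u \<le> s")
    case True
    have "(real s - real u) / (real s + real u + 2) \<le> 1"
      by (simp add: field_simps)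
    moreover have "0 \<le> (real s - real u) / (real s + real u + 2)"
      using True by simp
    ultimately show ?thesis
      unfolding wz_prod_Suc using Suc.IH wz_prod_nonneg by (intro mult_le_one)
  qed (simp add: wz_prod_eq_0)
qed simp

lemma wz_prod_lower: "1 - real u * (real u + 1) / (real s + 2) \<le> wz_prod u s"
proof (induction u)
  case (Suc u)
  show ?case
  proof (cases "u \<le> s")
    case True
    define f where "f = (real s - real u) / (real s + real u + 2)"
    have "1 - f \<le> (2 * real u + 2) / (real s + 2)"
      by (simp add: f_def field_simps)
    moreover have "wz_prod u s * (1 - f) \<le> 1 - f"
      using wz_prod_nonneg[of u s] wz_prod_le_1[of u s] True
      by (intro mult_left_le_one_le) (auto simp: f_def field_simps)
    moreover have "wz_prod (Suc u) s = wz_prod u s - wz_prod u s * (1 - f)"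
      by (simp add: wz_prod_Suc f_def algebra_simps)
    moreover have "real (Suc u) * (real (Suc u) + 1) / (real s + 2)
        = real u * (real u + 1) / (real s + 2) + (2 * real u + 2) / (real s + 2)"
      by (subst add_divide_distrib[symmetric]) (simp add: algebra_simps)
    ultimately show ?thesis
      using Suc.IH by linarith
  next
    case False
    have "real (Suc u) * (real (Suc u) + 1) = real u * real u + 3 * real u + 2"
      by (simp add: algebra_simps)
    moreover have "real s \<le> real u" "0 \<le> real u * real u"
      using False by simp_all
    ultimately have "real s + 2 \<le> real (Suc u) * (real (Suc u) + 1)"
      by linarith
    then show ?thesis
      using False by (simp add: wz_prod_eq_0 field_simps)
  qed
qed simp

lemma wz_prod_Suc_right:
  "wz_prod u (Suc s) * (real s + 1 - real u) * (real s + 2 + real u)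
     = wz_prod u s * (real s + 1) * (real s + 2)"
proof (induction u)
  case (Suc u)
  have "wz_prod (Suc u) (Suc s) * (real s + 1 - real (Suc u)) * (real s + 2 + real (Suc u))
      = wz_prod u (Suc s) * (real s + 1 - real u) * (real s + 2 + real u)
        * (real s - real u) / (real s + real u + 2)"
    by (simp add: wz_prod_Suc field_simps)
  also have "\<dots> = wz_prod (Suc u) s * (real s + 1) * (real s + 2)"
    by (simp only: Suc.IH) (simp add: wz_prod_Suc)
  finally show ?case .
qed simp

lemma wz_prod_fact:
  "u \<le> s \<Longrightarrow> wz_prod u s = fact s * fact (s + 1) / (fact (s - u) * fact (s + u + 1))"
proof (induction u)
  case (Suc u)
  then have "u < s" by simp
  then have f: "fact (s - u) = (real s - real u) * (fact (s - Suc u) :: real)"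
    by (metis Suc_diff_Suc fact_Suc of_nat_mult mult.commute of_nat_diff less_imp_le)
  have g: "fact (s + Suc u + 1) = (real s + real u + 2) * (fact (s + u + 1) :: real)"
    by (simp add: algebra_simps)
  have "wz_prod (Suc u) s = fact s * fact (s + 1) / (fact (s - u) * fact (s + u + 1))
      * ((real s - real u) / (real s + real u + 2))"
    using Suc by (simp add: wz_prod_Suc)
  also have "\<dots> = fact s * fact (s + 1) / (fact (s - Suc u) * fact (s + Suc u + 1))"
    unfolding f g using \<open>u < s\<close> by (simp add: divide_simps del: fact_Suc)
  finally show ?case .
qed simp

definition wz_term :: "nat \<Rightarrow> nat \<Rightarrow> real" where
  "wz_term u s = central_ratio s / (real s + 1) * wz_prod u s"

lemma wz_term_0_left: "wz_term 0 s = 2 * central_ratio s - 2 * central_ratio (Suc s)"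
  by (simp add: wz_term_def central_ratio_Suc field_simps)

lemma wz_term_eq_0: "s < u \<Longrightarrow> wz_term u s = 0"
  by (simp add: wz_term_def wz_prod_eq_0)

lemma wz_term_nonneg: "0 \<le> wz_term u s"
  using wz_prod_nonneg[of u s] central_ratio_pos[of s] by (simp add: wz_term_def)

lemma wz_term_le: "wz_term u s \<le> wz_term 0 s"
proof -
  have "central_ratio s / (real s + 1) * wz_prod u s \<le> central_ratio s / (real s + 1)"
    using wz_prod_le_1[of u s] central_ratio_pos[of s] by (intro mult_left_le) simp_all
  then show ?thesis
    by (simp add: wz_term_def)
qed

lemma wz_term_lower: "wz_term 0 s * (1 - real u * (real u + 1) / (real s + 2)) \<le> wz_term u s"
  unfolding wz_term_def wz_prod_0 mult_1_right using central_ratio_pos[of s]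
  by (intro mult_left_mono wz_prod_lower) simp

lemma wz_term_Suc_left:
  "wz_term (Suc u) s = wz_term u s * (real s - real u) / (real s + real u + 2)"
  by (simp add: wz_term_def wz_prod_Suc)

lemma wz_term_Suc_right:
  "(real (Suc s) - real u) * wz_term u (Suc s)
     = wz_term u s * (real s + 1) * (2 * real s + 1) / (2 * (real s + real u + 2))"
proof -
  have "(real (Suc s) - real u) * wz_term u (Suc s)
      = central_ratio s * (2 * real s + 1) / (2 * (real s + 1) * (real s + 2))
        * ((real s + 1 - real u) * wz_prod u (Suc s))"
    by (simp add: wz_term_def central_ratio_Suc field_simps)
  also have "(real s + 1 - real u) * wz_prod u (Suc s)
      = wz_prod u s * (real s + 1) * (real s + 2) / (real s + real u + 2)"
    using wz_prod_Suc_right[of u s] by (simp add: field_simps)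
  also have "central_ratio s * (2 * real s + 1) / (2 * (real s + 1) * (real s + 2))
      * (wz_prod u s * (real s + 1) * (real s + 2) / (real s + real u + 2))
      = wz_term u s * (real s + 1) * (2 * real s + 1) / (2 * (real s + real u + 2))"
    by (simp add: wz_term_def divide_simps) (simp add: algebra_simps)
  finally show ?thesis .
qed

text \<open>
  With G(u,s) = 4(s-u) wz_term u s this is a WZ recurrence; summed over s it shows that
  (2u+1) * sum_s wz_term u s does not depend on u.
\<close>

lemma wz_recurrence:
  "(2 * real u + 3) * wz_term (Suc u) s - (2 * real u + 1) * wz_term u s
     = 4 * (real s - real u) * wz_term u s - 4 * (real (Suc s) - real u) * wz_term u (Suc s)"
proof -
  have "4 * (real (Suc s) - real u) * wz_term u (Suc s)
      = 2 * wz_term u s * (real s + 1) * (2 * real s + 1) / (real s + real u + 2)"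
    unfolding mult.assoc wz_term_Suc_right by (simp add: field_simps)
  then show ?thesis
    unfolding wz_term_Suc_left by (simp add: divide_simps) (simp add: algebra_simps)
qed

lemma wz_partial_sums:
  "(2 * real u + 3) * (\<Sum>s<N. wz_term (Suc u) s) - (2 * real u + 1) * (\<Sum>s<N. wz_term u s)
     = 4 * (real u - real N) * wz_term u N"
proof -
  have "(2 * real u + 3) * (\<Sum>s<N. wz_term (Suc u) s) - (2 * real u + 1) * (\<Sum>s<N. wz_term u s)
      = (\<Sum>s<N. (2 * real u + 3) * wz_term (Suc u) s - (2 * real u + 1) * wz_term u s)"
    by (simp add: sum_distrib_left sum_subtractf)
  also have "\<dots> = (\<Sum>s<N. 4 * (real s - real u) * wz_term u s
                        - 4 * (real (Suc s) - real u) * wz_term u (Suc s))"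
    by (simp only: wz_recurrence)
  also have "\<dots> = 4 * (real 0 - real u) * wz_term u 0 - 4 * (real N - real u) * wz_term u N"
    by (rule sum_lessThan_telescope')
  also have "4 * (real 0 - real u) * wz_term u 0 = 0"
    by (cases u) (simp_all add: wz_term_eq_0)
  finally show ?thesis
    by (simp add: algebra_simps)
qed

lemma wz_boundary_tendsto_0: "(\<lambda>N. (real N - real u) * wz_term u N) \<longlonglongrightarrow> 0"
proof (rule Lim_null_comparison[OF _ central_ratio_tendsto_0])
  have "\<bar>(real N - real u) * wz_term u N\<bar> \<le> central_ratio N" for N
  proof (cases "u \<le> N")
    case True
    then have "\<bar>(real N - real u) * wz_term u N\<bar> \<le> (real N + 1) * wz_term 0 N"
      using wz_term_nonneg[of u N] wz_term_le[of u N] by (simp add: mult_mono)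
    also have "\<dots> = central_ratio N"
      by (simp add: wz_term_def)
    finally show ?thesis .
  qed (simp add: wz_term_eq_0 less_imp_le central_ratio_pos)
  then show "\<forall>\<^sub>F N in sequentially. norm ((real N - real u) * wz_term u N) \<le> central_ratio N"
    by simp
qed

lemma wz_term_sums: "wz_term u sums (2 / (2 * real u + 1))"
proof (induction u)
  case 0
  have "(\<lambda>s. 2 * central_ratio s - 2 * central_ratio (Suc s)) sums (2 * central_ratio 0 - 0)"
    by (intro telescope_sums' tendsto_mult_right_zero central_ratio_tendsto_0)
  then show ?case
    by (simp add: wz_term_0_left)
next
  case (Suc u)
  have "(\<lambda>N. ((2 * real u + 1) * (\<Sum>s<N. wz_term u s) - 4 * ((real N - real u) * wz_term u N))
        / (2 * real u + 3))
      \<longlonglongrightarrow> ((2 * real u + 1) * (2 / (2 * real u + 1)) - 4 * 0) / (2 * real u + 3)"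
    using Suc[unfolded sums_def] wz_boundary_tendsto_0[of u] by (intro tendsto_intros) auto
  moreover have "((2 * real u + 1) * (\<Sum>s<N. wz_term u s) - 4 * ((real N - real u) * wz_term u N))
        / (2 * real u + 3) = (\<Sum>s<N. wz_term (Suc u) s)" for N
    using wz_partial_sums[of u N] by (simp add: field_simps)
  moreover have "((2 * real u + 1) * (2 / (2 * real u + 1)) - 4 * 0) / (2 * real u + 3)
      = 2 / (2 * real (Suc u) + 1)"
    by (simp add: divide_simps) (simp add: algebra_simps)
  ultimately show ?case
    by (simp add: sums_def)
qed

definition wz_tail :: "nat \<Rightarrow> nat \<Rightarrow> real" where
  "wz_tail u m = 2 / (2 * real u + 1) - (\<Sum>s<m. wz_term u s)"

lemma wz_tail_sums: "(\<lambda>n. wz_term u (n + m)) sums wz_tail u m"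
  unfolding wz_tail_def by (rule sums_split_initial_segment[OF wz_term_sums])

lemma wz_term_0_tail_sums: "(\<lambda>n. wz_term 0 (n + m)) sums (2 * central_ratio m)"
  by (rule telescope_tail_sums) (simp_all add: wz_term_0_left tendsto_mult_right_zero central_ratio_tendsto_0)

lemma wz_tail_le: "wz_tail u m \<le> 2 * central_ratio m"
  using wz_term_le by (rule sums_le[OF _ wz_tail_sums wz_term_0_tail_sums])

lemma wz_tail_ge: "2 * central_ratio m * (1 - real u * (real u + 1) / (3 * (real m + 1))) \<le> wz_tail u m"
proof -
  define h where "h s = 2 * central_ratio s / (3 * (real s + 1))" for s
  have "h \<longlonglongrightarrow> 0"
  proof (rule Lim_null_comparison[OF _ central_ratio_tendsto_0])
    show "\<forall>\<^sub>F s in sequentially. norm (h s) \<le> central_ratio s"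
      using central_ratio_pos by (intro always_eventually allI) (simp add: h_def field_simps less_imp_le)
  qed
  moreover have "wz_term 0 s / (real s + 2) = h s - h (Suc s)" for s
    by (simp add: h_def wz_term_def central_ratio_Suc divide_simps) (simp add: algebra_simps)
  ultimately have "(\<lambda>n. wz_term 0 (n + m) / (real (n + m) + 2)) sums h m"
    by (rule telescope_tail_sums)
  then have "(\<lambda>n. wz_term 0 (n + m) - real u * (real u + 1) * (wz_term 0 (n + m) / (real (n + m) + 2)))
      sums (2 * central_ratio m - real u * (real u + 1) * h m)"
    by (intro sums_diff sums_mult wz_term_0_tail_sums)
  moreover have "wz_term 0 s - real u * (real u + 1) * (wz_term 0 s / (real s + 2))
      = wz_term 0 s * (1 - real u * (real u + 1) / (real s + 2))" for s
    by (simp add: algebra_simps)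
  ultimately have "(\<lambda>n. wz_term 0 (n + m) * (1 - real u * (real u + 1) / (real (n + m) + 2)))
      sums (2 * central_ratio m * (1 - real u * (real u + 1) / (3 * (real m + 1))))"
    by (simp add: h_def algebra_simps)
  from sums_le[OF _ this wz_tail_sums] show ?thesis
    using wz_term_lower by blast
qed

section \<open>Taylor coefficients of cosh\<close>

definition cosh_coeff :: "real \<Rightarrow> nat \<Rightarrow> real" where
  "cosh_coeff x u = x ^ (2 * u) / fact (2 * u)"

lemma cosh_coeff_nonneg: "0 \<le> cosh_coeff x u"
  by (simp add: cosh_coeff_def power_mult)

lemma cosh_coeff_sums: "cosh_coeff x sums cosh x" for x :: real
proof -
  have "(\<lambda>n. if even n then x ^ n /\<^sub>R fact n else 0) sums cosh x"
    by (rule cosh_converges)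
  then have "(\<lambda>n. (\<lambda>n. if even n then x ^ n /\<^sub>R fact n else 0) (2 * n)) sums cosh x"
    by (subst sums_mono_reindex) (auto simp: strict_mono_def elim!: evenE)
  then show ?thesis
    unfolding cosh_coeff_def[abs_def] by (simp add: divide_inverse mult_ac)
qed

lemma sinh_div_sums:
  fixes x :: real
  assumes "x \<noteq> 0"
  shows "(\<lambda>u. cosh_coeff x u / (2 * real u + 1)) sums (sinh x / x)"
proof -
  have "(\<lambda>n. if even n then 0 else x ^ n /\<^sub>R fact n) sums sinh x"
    by (rule sinh_converges)
  then have "(\<lambda>n. (\<lambda>n. if even n then 0 else x ^ n /\<^sub>R fact n) (2 * n + 1)) sums sinh x"
    by (subst sums_mono_reindex) (auto simp: strict_mono_def elim!: oddE)
  then have "(\<lambda>n. x ^ (2 * n + 1) / fact (2 * n + 1) / x) sums (sinh x / x)"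
    by (intro sums_divide) (simp add: divide_inverse_commute)
  moreover have "x ^ (2 * n + 1) / fact (2 * n + 1) / x = cosh_coeff x n / (2 * real n + 1)" for n
  proof -
    have "fact (2 * n + 1) = (2 * real n + 1) * (fact (2 * n) :: real)"
      by (simp add: algebra_simps)
    then show ?thesis
      using assms by (simp add: cosh_coeff_def)
  qed
  ultimately show ?thesis
    by simp
qed

lemma cosh_coeff_Suc:
  "cosh_coeff x (Suc u) = x\<^sup>2 * cosh_coeff x u / ((2 * real u + 2) * (2 * real u + 1))"
  by (simp add: cosh_coeff_def power_add power2_eq_square algebra_simps)

lemma cosh_le_inverse_geometric:
  fixes x :: real
  assumes "x\<^sup>2 < 2"
  shows "cosh x \<le> 1 / (1 - x\<^sup>2 / 2)"
proof -
  have "cosh_coeff x u \<le> (x\<^sup>2 / 2) ^ u" for u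
  proof (induction u)
    case (Suc u)
    have "2 * 1 \<le> (2 * real u + 2) * (2 * real u + 1)"
      by (intro mult_mono) auto
    then have "cosh_coeff x (Suc u) \<le> x\<^sup>2 * cosh_coeff x u / 2"
      unfolding cosh_coeff_Suc using cosh_coeff_nonneg[of x u]
      by (intro divide_left_mono) simp_all
    also have "\<dots> \<le> (x\<^sup>2 / 2) ^ Suc u"
      using Suc by (simp add: mult_left_mono)
    finally show ?case .
  qed (simp add: cosh_coeff_def)
  moreover have "(\<lambda>u. (x\<^sup>2 / 2) ^ u) sums (1 / (1 - x\<^sup>2 / 2))"
    using assms by (intro geometric_sums) simp
  ultimately show ?thesis
    by (intro sums_le[OF _ cosh_coeff_sums])
qed

text \<open>Since u(u+1) \<le> 2u(2u-1), the weights u(u+1) are absorbed by shifting the index.\<close>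

lemma cosh_coeff_pronic:
  fixes x :: real
  shows "summable (\<lambda>u. cosh_coeff x u * (real u * (real u + 1)))"
    and "(\<Sum>u. cosh_coeff x u * (real u * (real u + 1))) \<le> x\<^sup>2 * cosh x"
proof -
  define b where "b u = cosh_coeff x u * (real u * (real u + 1))" for u
  have shift_le: "b (Suc u) \<le> x\<^sup>2 * cosh_coeff x u" for u
  proof -
    have "real (Suc u) * (real (Suc u) + 1) \<le> (2 * real u + 2) * (2 * real u + 1)"
      by (simp add: algebra_simps)
    then show ?thesis
      unfolding b_def cosh_coeff_Suc using cosh_coeff_nonneg[of x u]
      by (simp add: divide_simps mult_left_mono)
  qed
  moreover have bound: "(\<lambda>u. x\<^sup>2 * cosh_coeff x u) sums (x\<^sup>2 * cosh x)"
    by (intro sums_mult cosh_coeff_sums)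
  moreover have "0 \<le> b u" for u
    by (simp add: b_def cosh_coeff_nonneg)
  ultimately have summable_shift: "summable (\<lambda>u. b (Suc u))"
    by (intro summable_comparison_test'[OF sums_summable[OF bound]]) simp
  moreover have "(\<Sum>u. b (Suc u)) \<le> x\<^sup>2 * cosh x"
    by (rule sums_le[OF shift_le summable_sums[OF summable_shift] bound])
  moreover have "b 0 = 0"
    by (simp add: b_def)
  ultimately show "summable b" "suminf b \<le> x\<^sup>2 * cosh x"
    by (simp_all add: summable_Suc_iff suminf_split_head)
qed

section \<open>The sum S4\<close>

lemma pochhammer_half_shift:
  "(-1) ^ s * pochhammer (1/2 - real s) (s + 1) = pochhammer (1/2 :: real) s / 2"
proof -
  have sign: "(-1) ^ s * (-1) ^ (s + 1) = (-1 :: real)"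
    by (simp flip: power_add)
  have "pochhammer (1/2 - real s) (s + 1) = (-1) ^ (s + 1) * pochhammer (- 1/2 :: real) (s + 1)"
    using pochhammer_minus[of "real s - 1/2" "s + 1"] by (simp add: algebra_simps)
  then have "(-1) ^ s * pochhammer (1/2 - real s) (s + 1)
      = ((-1) ^ s * (-1) ^ (s + 1)) * pochhammer (- 1/2 :: real) (s + 1)"
    by (simp only: mult.assoc)
  also have "\<dots> = pochhammer (1/2 :: real) s / 2"
    unfolding sign by (simp add: pochhammer_rec)
  finally show ?thesis .
qed

lemma pochhammer_neg_of_nat:
  "u \<le> s \<Longrightarrow> (-1) ^ u * pochhammer (- real s) u = fact s / fact (s - u)"
  using binomial_fact[of u s] by (simp add: binomial_gbinomial gbinomial_pochhammer field_simps)

lemma wz_term_fact: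
  assumes "u \<le> s"
  shows "wz_term u s = pochhammer (1/2) s * fact s / (fact (s - u) * fact (s + u + 1))"
proof -
  have "fact (s + 1) = (real s + 1) * (fact s :: real)"
    by simp
  then show ?thesis
    unfolding wz_term_def central_ratio_def wz_prod_fact[OF assms] by (simp del: fact_Suc)
qed

lemma S4_summand_eq:
  assumes "u \<le> s"
  shows "(-1) ^ s * pochhammer (1/2 - real s) (s + 1) *
      ((-1) ^ u * pochhammer (- real s) u / (fact (s + u + 1) * fact (2 * u)) * (pi\<^sup>2 / 36) ^ u)
    = cosh_coeff alpha u * wz_term u s / 2"
proof -
  have "(pi\<^sup>2 / 36) ^ u = alpha ^ (2 * u)"
    by (simp add: alpha_def power_mult power_divide)
  then have "(-1) ^ s * pochhammer (1/2 - real s) (s + 1) *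
      ((-1) ^ u * pochhammer (- real s) u / (fact (s + u + 1) * fact (2 * u)) * (pi\<^sup>2 / 36) ^ u)
    = pochhammer (1/2) s / 2 * (fact s / fact (s - u) / (fact (s + u + 1) * fact (2 * u)) * alpha ^ (2 * u))"
    by (simp only: pochhammer_half_shift pochhammer_neg_of_nat[OF assms] flip: mult.assoc)
  also have "\<dots> = cosh_coeff alpha u * wz_term u s / 2"
    by (simp add: cosh_coeff_def wz_term_fact[OF assms] mult_ac del: fact_Suc)
  finally show ?thesis .
qed

lemma S4_eq_sum_wz:
  "S4 t = (\<Sum>u<Suc t. cosh_coeff alpha u * (\<Sum>s<Suc t. wz_term u s) / 2)"
proof -
  have "S4 t = (\<Sum>s=0..t. \<Sum>u=0..s. cosh_coeff alpha u * wz_term u s / 2)"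
    unfolding S4_def sum_distrib_left by (intro sum.cong refl S4_summand_eq) auto
  also have "\<dots> = (\<Sum>s<Suc t. \<Sum>u<Suc t. cosh_coeff alpha u * wz_term u s / 2)"
    by (intro sum.cong sum.mono_neutral_left) (auto simp: wz_term_eq_0)
  also have "\<dots> = (\<Sum>u<Suc t. cosh_coeff alpha u * (\<Sum>s<Suc t. wz_term u s) / 2)"
    by (subst sum.swap) (simp only: sum_distrib_left[symmetric] sum_divide_distrib[symmetric])
  finally show ?thesis .
qed

lemma S4_sums: "(\<lambda>u. cosh_coeff alpha u * (\<Sum>s<Suc t. wz_term u s) / 2) sums S4 t"
  unfolding S4_eq_sum_wz by (rule sums_finite) (auto simp: wz_term_eq_0)

lemma gchoose_neg_three_halves:
  "(-1) ^ t * ((-3/2 :: real) gchoose t) = 2 * (real t + 1) * central_ratio (Suc t)"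
proof -
  have "(-1) ^ t * ((-3/2 :: real) gchoose t) = pochhammer (3/2) t / fact t"
    by (simp add: gbinomial_pochhammer flip: mult.assoc power_mult_distrib)
  also have "pochhammer (3/2) t = 2 * pochhammer (1/2 :: real) (Suc t)"
    by (simp add: pochhammer_rec)
  also have "2 * pochhammer (1/2) (Suc t) / fact t = 2 * (real t + 1) * central_ratio (Suc t)"
    by (simp add: central_ratio_def divide_simps)
  finally show ?thesis .
qed

lemma alpha_pos: "0 < alpha"
  by (simp add: alpha_def)

definition tail_weight :: "nat \<Rightarrow> nat \<Rightarrow> real" where
  "tail_weight t u = 1 / (2 * real t) - wz_tail u (Suc t) / (4 * (real t + 1) * central_ratio (Suc t))"

lemma S4_normalized_sums:
  "(\<lambda>u. cosh_coeff alpha u * tail_weight t u)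
   sums (S4 t / ((-1)^t * ((-3/2 :: real) gchoose t))
         - (-1)^t / ((-3/2 :: real) gchoose t) * (sinh alpha / alpha)
         + cosh alpha / (2 * real t))"
proof -
  define G where "G = 2 * (real t + 1) * central_ratio (Suc t)"
  have G: "(-1)^t * ((-3/2 :: real) gchoose t) = G"
    unfolding G_def by (rule gchoose_neg_three_halves)
  moreover have "(-1)^t / ((-3/2 :: real) gchoose t) = 1 / ((-1)^t * ((-3/2 :: real) gchoose t))"
    by (cases "even t") simp_all
  ultimately have G': "(-1)^t / ((-3/2 :: real) gchoose t) = 1 / G"
    by simp
  have "(\<lambda>u. cosh_coeff alpha u * (\<Sum>s<Suc t. wz_term u s) / 2 / G
            - cosh_coeff alpha u / (2 * real u + 1) / G + cosh_coeff alpha u / (2 * real t))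
        sums (S4 t / G - sinh alpha / alpha / G + cosh alpha / (2 * real t))"
    using alpha_pos by (intro sums_add sums_diff sums_divide S4_sums sinh_div_sums cosh_coeff_sums) simp
  moreover have "cosh_coeff alpha u * (\<Sum>s<Suc t. wz_term u s) / 2 / G
            - cosh_coeff alpha u / (2 * real u + 1) / G + cosh_coeff alpha u / (2 * real t)
      = cosh_coeff alpha u * tail_weight t u" for u
  proof -
    define P where "P = (\<Sum>s<Suc t. wz_term u s)"
    have "central_ratio (Suc t) \<noteq> 0"
      using central_ratio_pos[of "Suc t"] by simp
    then show ?thesis
      unfolding tail_weight_def wz_tail_def P_def[symmetric]
      by (simp add: G_def divide_simps) (auto simp: algebra_simps)
  qed
  ultimately show ?thesis
    unfolding G G' by (simp add: mult_ac)
qed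

lemma tail_weight_lower: "1 / (2 * real t) - 1 / (2 * (real t + 1)) \<le> tail_weight t u"
proof -
  have "wz_tail u (Suc t) / (4 * (real t + 1) * central_ratio (Suc t))
      \<le> 2 * central_ratio (Suc t) / (4 * (real t + 1) * central_ratio (Suc t))"
    using central_ratio_pos[of "Suc t"] wz_tail_le by (intro divide_right_mono) simp_all
  also have "\<dots> = 1 / (2 * (real t + 1))"
    using central_ratio_pos[of "Suc t"] by (simp add: divide_simps)
  finally show ?thesis
    by (simp add: tail_weight_def)
qed

lemma tail_weight_upper:
  "tail_weight t u
     \<le> 1 / (2 * real t) - 1 / (2 * (real t + 1))
       + real u * (real u + 1) / (6 * (real t + 1) * (real t + 2))"
proof -
  have "1 / (2 * (real t + 1)) - real u * (real u + 1) / (6 * (real t + 1) * (real t + 2))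
      = 2 * central_ratio (Suc t) * (1 - real u * (real u + 1) / (3 * (real (Suc t) + 1)))
        / (4 * (real t + 1) * central_ratio (Suc t))"
    using central_ratio_pos[of "Suc t"] by (simp add: divide_simps) (simp add: algebra_simps)
  also have "\<dots> \<le> wz_tail u (Suc t) / (4 * (real t + 1) * central_ratio (Suc t))"
    using central_ratio_pos[of "Suc t"] wz_tail_ge[of "Suc t" u] by (intro divide_right_mono) simp_all
  finally show ?thesis
    by (simp add: tail_weight_def)
qed

lemma alpha_sq_le: "alpha\<^sup>2 \<le> 0.275"
proof -
  have "alpha \<le> 0.524"
    using pi_approx by (simp add: alpha_def)
  then have "alpha\<^sup>2 \<le> 0.524\<^sup>2"
    using alpha_pos by (intro power_mono) simp_all
  also have "(0.524 :: real)\<^sup>2 \<le> 0.275"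
    by (simp add: power2_eq_square)
  finally show ?thesis .
qed

lemma cosh_alpha_estimate:
  assumes "t \<ge> 1"
  shows "cosh alpha * (1 / (2 * real t) - 1 / (2 * (real t + 1))
           + alpha\<^sup>2 / (6 * (real t + 1) * (real t + 2))) < 13 / (20 * real t ^ 2)"
proof -
  have t: "real t \<ge> 1"
    using assms by simp
  have "1 / (2 * real t) - 1 / (2 * (real t + 1)) \<le> 1 / (2 * real t ^ 2)"
    using t by (simp add: divide_simps) (simp add: algebra_simps power2_eq_square)
  moreover have "alpha\<^sup>2 / (6 * (real t + 1) * (real t + 2)) \<le> alpha\<^sup>2 / (6 * real t ^ 2)"
    using t by (intro frac_le) (simp_all add: power2_eq_square algebra_simps)
  ultimately have "cosh alpha * (1 / (2 * real t) - 1 / (2 * (real t + 1))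
           + alpha\<^sup>2 / (6 * (real t + 1) * (real t + 2)))
      \<le> cosh alpha * (1 / (2 * real t ^ 2) + alpha\<^sup>2 / (6 * real t ^ 2))"
    by (intro mult_left_mono add_mono) simp_all
  also have "\<dots> = cosh alpha * (1 / 2 + alpha\<^sup>2 / 6) / real t ^ 2"
    using t by (simp add: field_simps)
  also have "\<dots> \<le> 1 / (1 - alpha\<^sup>2 / 2) * (1 / 2 + alpha\<^sup>2 / 6) / real t ^ 2"
    using alpha_sq_le cosh_le_inverse_geometric[of alpha]
    by (intro divide_right_mono mult_right_mono) simp_all
  also have "\<dots> < 13 / (20 * real t ^ 2)"
    using alpha_sq_le t by (simp add: divide_simps)
  finally show ?thesis .
qed

lemma normalized_sum_pos:
  assumes "t \<ge> 1" and "(\<lambda>u. cosh_coeff alpha u * tail_weight t u) sums E"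
  shows "0 < E"
proof -
  have "0 < 1 / (2 * real t) - 1 / (2 * (real t + 1))"
    using assms(1) by (simp add: divide_simps)
  moreover have "(1 / (2 * real t) - 1 / (2 * (real t + 1))) * cosh_coeff alpha u
      \<le> cosh_coeff alpha u * tail_weight t u" for u
    using tail_weight_lower[of t u] cosh_coeff_nonneg[of alpha u]
    by (simp add: mult_left_mono mult.commute)
  then have "(1 / (2 * real t) - 1 / (2 * (real t + 1))) * cosh alpha \<le> E"
    by (rule sums_le[OF _ sums_mult[OF cosh_coeff_sums] assms(2)])
  ultimately show ?thesis
    by (smt (verit) cosh_real_pos mult_pos_pos)
qed

lemma normalized_sum_upper:
  assumes "t \<ge> 1" and E: "(\<lambda>u. cosh_coeff alpha u * tail_weight t u) sums E"
  shows "E < 13 / (20 * real t ^ 2)"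
proof -
  define d where "d = 1 / (2 * real t) - 1 / (2 * (real t + 1))"
  define e where "e = 1 / (6 * (real t + 1) * (real t + 2))"
  have upper_sums: "(\<lambda>u. d * cosh_coeff alpha u + e * (cosh_coeff alpha u * (real u * (real u + 1))))
      sums (d * cosh alpha + e * (\<Sum>u. cosh_coeff alpha u * (real u * (real u + 1))))"
    by (intro sums_add sums_mult cosh_coeff_sums summable_sums cosh_coeff_pronic)
  have "cosh_coeff alpha u * tail_weight t u
      \<le> d * cosh_coeff alpha u + e * (cosh_coeff alpha u * (real u * (real u + 1)))" for u
  proof -
    have "cosh_coeff alpha u * tail_weight t u
        \<le> cosh_coeff alpha u * (d + e * (real u * (real u + 1)))"
      using tail_weight_upper[of t u] cosh_coeff_nonneg[of alpha u]
      by (intro mult_left_mono) (simp_all add: d_def e_def)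
    then show ?thesis
      by (simp add: distrib_left mult_ac)
  qed
  then have "E \<le> d * cosh alpha + e * (\<Sum>u. cosh_coeff alpha u * (real u * (real u + 1)))"
    by (rule sums_le[OF _ E upper_sums])
  also have "\<dots> \<le> d * cosh alpha + e * (alpha\<^sup>2 * cosh alpha)"
    using cosh_coeff_pronic(2)[of alpha] by (intro add_left_mono mult_left_mono) (simp_all add: e_def)
  also have "\<dots> = cosh alpha * (d + alpha\<^sup>2 * e)"
    by (simp add: algebra_simps)
  also have "\<dots> < 13 / (20 * real t ^ 2)"
    using cosh_alpha_estimate[OF assms(1)] by (simp add: d_def e_def)
  finally show ?thesis .
qed

theorem mainTheorem13:
  fixes t :: nat
  assumes "t \<ge> 1"
  shows "- 1 / (3 * real t ^ 2) <
           S4 t / ((-1)^t * ((-3/2 :: real) gchoose t))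
           - (-1)^t / ((-3/2 :: real) gchoose t) * (sinh alpha / alpha)
           + cosh alpha / (2 * real t)
       \<and> S4 t / ((-1)^t * ((-3/2 :: real) gchoose t))
           - (-1)^t / ((-3/2 :: real) gchoose t) * (sinh alpha / alpha)
           + cosh alpha / (2 * real t) < 13 / (20 * real t ^ 2)"
proof -
  have "- 1 / (3 * real t ^ 2) < 0"
    using assms by simp
  with normalized_sum_pos[OF assms S4_normalized_sums]
    and normalized_sum_upper[OF assms S4_normalized_sums]
  show ?thesis
    by linarith
qed

end
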